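(* Let $(B,+)$ be an abelian group and let $\lambda\colon(B,+)\to\operatorname{Aut}(B,+)$, $x\mapsto\lambda_x$, be a group homomorphism such that $\lambda_{\lambda_y(x)}=\lambda_x$ for all $x,y\in B$. Define a product on $B$ by $xy=x+\lambda_x(y)$ for $x,y\in B$. Then $(B,+,\cdot)$ is a left brace with $B^{(3)}=\{0\}$.
   Context: A left brace $(A,+,\cdot)$ is a set $A$ with two binary operations such that $(A,+)$ is an abelian group, $(A,\cdot)$ is a group, and $a(b+c)=ab-a+ac$ for all $a,b,c\in A$. In a left brace, $a*b=-a+ab-b$. For subsets $L,M\subseteq A$, $L*M$ is the subgroup of $(A,+)$ generated by $\{l*m\mid l\in L,m\in M\}$. Set $A^{(1)}=A$ and $A^{(r+1)}=A^{(r)}*A$ for $r\ge1$. *)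

theory Defs
  imports "HOL-Algebra.Group"
begin

text \<open>The additive group (A,+) is the ambient type with its ab_group_add structure;
  the multiplication is an arbitrary binary operation m on the whole type.\<close>

definition left_brace :: "('a::ab_group_add \<Rightarrow> 'a \<Rightarrow> 'a) \<Rightarrow> bool" where
  "left_brace m \<longleftrightarrow>
     (\<exists>e. group \<lparr>carrier = UNIV, monoid.mult = m, one = e\<rparr>) \<and>
     (\<forall>a b c. m a (b + c) = m a b - a + m a c)"

definition brace_star :: "('a::ab_group_add \<Rightarrow> 'a \<Rightarrow> 'a) \<Rightarrow> 'a \<Rightarrow> 'a \<Rightarrow> 'a" where
  "brace_star m a b = - a + m a b - b"

definition add_subgroup :: "'a::ab_group_add set \<Rightarrow> bool" where
  "add_subgroup H \<longleftrightarrow> 0 \<in> H \<and> (\<forall>x\<in>H. \<forall>y\<in>H. x + y \<in> H) \<and> (\<forall>x\<in>H. - x \<in> H)"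

definition add_subgroup_gen :: "'a::ab_group_add set \<Rightarrow> 'a set" where
  "add_subgroup_gen S = \<Inter>{H. add_subgroup H \<and> S \<subseteq> H}"

definition brace_star_set :: "('a::ab_group_add \<Rightarrow> 'a \<Rightarrow> 'a) \<Rightarrow> 'a set \<Rightarrow> 'a set \<Rightarrow> 'a set" where
  "brace_star_set m L M = add_subgroup_gen {brace_star m l x | l x. l \<in> L \<and> x \<in> M}"

text \<open>Right series A^(r), indexed from r = 1; the value at 0 is a junk value.\<close>
fun right_series :: "('a::ab_group_add \<Rightarrow> 'a \<Rightarrow> 'a) \<Rightarrow> nat \<Rightarrow> 'a set" where
  "right_series m 0 = UNIV"
| "right_series m (Suc 0) = UNIV"
| "right_series m (Suc (Suc r)) = brace_star_set m (right_series m (Suc r)) UNIV"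

end

theory Submission
  imports Defs
begin

text \<open>With \<open>x y = x + \<lambda>_x(y)\<close>, the invariance \<open>\<lambda>_{\<lambda>_x(y)} = \<lambda>_y\<close> gives
  \<open>\<lambda>_{x y} = \<lambda>_x \<circ> \<lambda>_y\<close>, which is exactly associativity; the brace law is the
  additivity of \<open>\<lambda>_x\<close>. Moreover \<open>x * y = \<lambda>_x(y) - y\<close> and
  \<open>\<lambda>_{\<lambda>_x(y) - y} = \<lambda>_y \<circ> \<lambda>_y\<^sup>-\<^sup>1 = id\<close>, so \<open>B^(2)\<close> lies in the additive subgroup
  \<open>ker \<lambda>\<close>, and \<open>l * y = \<lambda>_l(y) - y = 0\<close> for every \<open>l \<in> ker \<lambda>\<close>.\<close>

lemma add_subgroup_gen_least:
  "add_subgroup H \<Longrightarrow> S \<subseteq> H \<Longrightarrow> add_subgroup_gen S \<subseteq> H"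
  unfolding add_subgroup_gen_def by blast

lemma zero_in_add_subgroup_gen: "0 \<in> add_subgroup_gen S"
  unfolding add_subgroup_gen_def add_subgroup_def by blast

lemma add_subgroup_zero: "add_subgroup {0}"
  by (simp add: add_subgroup_def)

lemma right_series_2: "right_series m 2 = brace_star_set m UNIV UNIV"
  by (simp add: numeral_2_eq_2)

lemma right_series_3: "right_series m 3 = brace_star_set m (right_series m 2) UNIV"
  by (simp add: numeral_2_eq_2 numeral_3_eq_3)

locale lambda_hom =
  fixes lam :: "'a::ab_group_add \<Rightarrow> 'a \<Rightarrow> 'a"
  assumes lam_bij: "bij (lam x)"
    and lam_add: "lam x (a + b) = lam x a + lam x b"
    and lam_hom: "lam (x + y) = lam x \<circ> lam y"
begin

lemma lam_zero_left: "lam 0 = id"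
proof
  fix y
  have "lam 0 (lam 0 y) = lam 0 y"
    using fun_cong[OF lam_hom[of 0 0]] by simp
  then show "lam 0 y = id y"
    using bij_is_inj[OF lam_bij] by (simp add: inj_eq)
qed

lemma lam_zero_right: "lam x 0 = 0"
  using lam_add[of x 0 0] by simp

lemma lam_minus_cancel: "lam (- x) (lam x y) = y"
  using fun_cong[OF lam_hom[of "- x" x]] by (simp add: lam_zero_left)

definition lam_kernel :: "'a set" where
  "lam_kernel = {x. lam x = id}"

lemma add_subgroup_lam_kernel: "add_subgroup lam_kernel"
proof -
  have "lam (- x) = id" if "lam x = id" for x
    using lam_minus_cancel[of x] that by (simp add: fun_eq_iff)
  then show ?thesis
    unfolding add_subgroup_def lam_kernel_def by (simp add: lam_zero_left lam_hom)
qed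

end

locale invariant_lambda = lambda_hom +
  assumes lam_lam: "lam (lam y x) = lam x"
begin

abbreviation lam_mult :: "'a \<Rightarrow> 'a \<Rightarrow> 'a" where
  "lam_mult x y \<equiv> x + lam x y"

lemma lam_of_lam_mult: "lam (lam_mult x y) = lam x \<circ> lam y"
  by (simp add: lam_hom lam_lam)

lemma group_lam_mult: "group \<lparr>carrier = UNIV, monoid.mult = lam_mult, one = 0\<rparr>"
proof (rule groupI)
  fix x :: 'a
  have "lam_mult (lam (- x) (- x)) x = 0"
    using lam_add[of "- x" "- x" x] by (simp add: lam_lam lam_zero_right)
  then show "\<exists>y\<in>carrier \<lparr>carrier = UNIV, monoid.mult = lam_mult, one = 0\<rparr>.
      y \<otimes>\<^bsub>\<lparr>carrier = UNIV, monoid.mult = lam_mult, one = 0\<rparr>\<^esub> x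
        = \<one>\<^bsub>\<lparr>carrier = UNIV, monoid.mult = lam_mult, one = 0\<rparr>\<^esub>"
    by auto
qed (auto simp: lam_of_lam_mult lam_add lam_zero_left lam_zero_right add.assoc)

lemma left_brace_lam_mult: "left_brace lam_mult"
  unfolding left_brace_def
  using group_lam_mult by (auto simp: lam_add algebra_simps)

lemma brace_star_lam_mult: "brace_star lam_mult a b = lam a b - b"
  by (simp add: brace_star_def)

lemma brace_star_in_lam_kernel: "lam a b - b \<in> lam_kernel"
proof -
  have "lam (lam a b - b) = lam (lam a b) \<circ> lam (- b)"
    using lam_hom[of "lam a b" "- b"] by simp
  also have "\<dots> = id"
    by (simp add: lam_lam fun_eq_iff lam_hom[symmetric] lam_zero_left)
  finally show ?thesis
    by (simp add: lam_kernel_def)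
qed

lemma right_series_2_subset_lam_kernel: "right_series lam_mult 2 \<subseteq> lam_kernel"
  unfolding right_series_2 brace_star_set_def
  by (rule add_subgroup_gen_least[OF add_subgroup_lam_kernel])
     (auto simp: brace_star_lam_mult brace_star_in_lam_kernel)

lemma right_series_3_lam_mult: "right_series lam_mult 3 = {0}"
proof -
  have "brace_star lam_mult l y = 0" if "l \<in> right_series lam_mult 2" for l y
    using that right_series_2_subset_lam_kernel
    by (auto simp: brace_star_lam_mult lam_kernel_def)
  then have "right_series lam_mult 3 \<subseteq> {0}"
    unfolding right_series_3 brace_star_set_def
    by (intro add_subgroup_gen_least[OF add_subgroup_zero]) auto
  moreover have "0 \<in> right_series lam_mult 3"
    unfolding right_series_3 brace_star_set_def by (rule zero_in_add_subgroup_gen)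
  ultimately show ?thesis
    by blast
qed

end

theorem theoremA:
  fixes lam :: "'a::ab_group_add \<Rightarrow> 'a \<Rightarrow> 'a"
  assumes aut: "\<And>x. bij (lam x) \<and> (\<forall>a b. lam x (a + b) = lam x a + lam x b)"
    and hom: "\<And>x y. lam (x + y) = lam x \<circ> lam y"
    and inv: "\<And>x y. lam (lam y x) = lam x"
  shows "left_brace (\<lambda>x y. x + lam x y) \<and> right_series (\<lambda>x y. x + lam x y) 3 = {0}"
proof -
  interpret invariant_lambda lam
    by unfold_locales (use aut hom inv in auto)
  show ?thesis
    using left_brace_lam_mult right_series_3_lam_mult by blast
qed

end
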